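(* Let $\mathbf{X}^{(1)}$ and $\mathbf{X}^{(2)}$ be $p$-variate random vectors with absolutely continuous distributions (populations $\Pi^{(1)}$, $\Pi^{(2)}$, with prior probabilities $\pi_1,\pi_2$), fix a unit vector $\mathbf{u}\in\mathbb{R}^p$, and let $Q_Z^{(k)}(\theta;\mathbf{u})$ be the $\theta$-quantile of $Z^{(k)}=\mathbf{u}^{\top}\mathbf{X}^{(k)}$. For $\theta\in(0,1)$ let $Q_{\alpha}(\theta;\mathbf{u})=\min_k Q_Z^{(k)}(\theta;\mathbf{u})$ and $Q_{\beta}(\theta;\mathbf{u})=\max_k Q_Z^{(k)}(\theta;\mathbf{u})$, with $G_\alpha,g_\alpha,\pi_\alpha$ (resp. $G_\beta,g_\beta,\pi_\beta$) the distribution function, density and prior probability of the population attaining the minimum (resp. maximum), and let $\tilde Q(\theta;\mathbf{u})=\theta Q_\alpha(\theta;\mathbf{u})+(1-\theta)Q_\beta(\theta;\mathbf{u})$. Assume that the density functions $g_\alpha(z;\mathbf{u})$ and $g_\beta(z;\mathbf{u})$ exist and are nonzero on the same compact domain $\mathcal{Z}$. Further assume that there is a point $z_0$ with $\pi_\alpha g_\alpha(z_0;\mathbf{u})=\pi_\beta g_\beta(z_0;\mathbf{u})$ such that $\pi_\alpha g_\alpha(z;\mathbf{u})>\pi_\beta g_\beta(z;\mathbf{u})$ for $z$ on one side of $z_0$ and $\pi_\alpha g_\alpha(z;\mathbf{u})<\pi_\beta g_\beta(z;\mathbf{u})$ for $z$ on the other side of $z_0$. Then the directional quantile classifier using the quantile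 $\tilde Q(\theta;\mathbf{u})$ with $\theta$ chosen to minimise the theoretical misclassification probability $$1-\psi(\theta)=\pi_\alpha\{1-G_\alpha(\tilde Q(\theta;\mathbf{u});\mathbf{u})\}+\pi_\beta G_\beta(\tilde Q(\theta;\mathbf{u});\mathbf{u})$$ achieves the optimal Bayes misclassification probability (for classifying on the basis of the projected observation).
   Context: The directional quantile classifier at level $\theta$ and direction $\mathbf{u}$ assigns $\mathbf{y}$ to $\Pi^{(1)}$ if $\Phi^{(2)}(\theta;\mathbf{u}^{\top}\mathbf{y})-\Phi^{(1)}(\theta;\mathbf{u}^{\top}\mathbf{y})>0$ and to $\Pi^{(2)}$ otherwise, where $\Phi^{(k)}(\theta;z)=\{\theta+(1-2\theta)I(z-Q_Z^{(k)}(\theta;\mathbf{u})<0)\}\,|z-Q_Z^{(k)}(\theta;\mathbf{u})|$; equivalently it assigns $z=\mathbf{u}^{\top}\mathbf{y}$ to the population attaining $Q_\alpha$ when $z<\tilde Q(\theta;\mathbf{u})$ and to the other population otherwise, and $1-\psi(\theta)$ is its misclassification probability. *)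

theory Defs
  imports "HOL-Probability.Probability"
begin

definition proj_cdf :: "(real^'p) measure \<Rightarrow> real^'p \<Rightarrow> real \<Rightarrow> real" where
  "proj_cdf P u z = measure P {x \<in> space P. u \<bullet> x \<le> z}"

definition quantile :: "(real \<Rightarrow> real) \<Rightarrow> real \<Rightarrow> real" where
  "quantile G \<theta> = Inf {z. \<theta> \<le> G z}"

definition Q_tilde :: "(real^'p) measure \<Rightarrow> (real^'p) measure \<Rightarrow> real^'p \<Rightarrow> real \<Rightarrow> real" where
  "Q_tilde Pa Pb u \<theta> =
     \<theta> * quantile (proj_cdf Pa u) \<theta> + (1 - \<theta>) * quantile (proj_cdf Pb u) \<theta>"

text \<open>Theoretical misclassification probability 1 - psi(theta) of the directional
  quantile classifier (assign z = u'y to Pi_alpha iff z < Q-tilde).\<close>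
definition dq_error :: "real \<Rightarrow> (real^'p) measure \<Rightarrow> real \<Rightarrow> (real^'p) measure \<Rightarrow> real^'p \<Rightarrow> real \<Rightarrow> real" where
  "dq_error \<pi>a Pa \<pi>b Pb u \<theta> =
     \<pi>a * (1 - proj_cdf Pa u (Q_tilde Pa Pb u \<theta>)) + \<pi>b * proj_cdf Pb u (Q_tilde Pa Pb u \<theta>)"

text \<open>Optimal Bayes misclassification probability among all (measurable) classifiers
  based on the projected observation z = u'y: a classifier is a Borel set A of
  values z assigned to Pi_alpha (the complement is assigned to Pi_beta).\<close>
definition bayes_error_proj :: "real \<Rightarrow> (real^'p) measure \<Rightarrow> real \<Rightarrow> (real^'p) measure \<Rightarrow> real^'p \<Rightarrow> real" where
  "bayes_error_proj \<pi>a Pa \<pi>b Pb u =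
     (INF A \<in> sets (borel :: real measure).
        \<pi>a * measure Pa {x \<in> space Pa. u \<bullet> x \<notin> A} + \<pi>b * measure Pb {x \<in> space Pb. u \<bullet> x \<in> A})"

end

theory Submission
  imports Defs
begin

(* The quantile ordering Q_alpha <= Q_beta forces G_beta <= G_alpha on the support, and this
   rules out the crossing in which pi_beta g_beta dominates to the left of z0: integrating the
   two one-sided inequalities would give both pi_alpha < pi_beta and pi_beta < pi_alpha.
   Hence the Bayes rule for z = u'y assigns z to Pi_alpha exactly when z <= z0, since that
   choice minimises the integrand of the error pointwise.  On the other hand
   theta -> Q~(theta; u) extends continuously to [0,1] with the values a and b at the end
   points, so some theta in (0,1) has Q~(theta; u) = z0, and for this theta the directional
   quantile classifier is the Bayes rule. *)

lemma integral_less_lborel: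
  fixes f h :: "real \<Rightarrow> real"
  assumes "integrable lborel f" "integrable lborel h" "\<And>x. f x \<le> h x"
    and "s < t" "\<And>x. x \<in> {s<..<t} \<Longrightarrow> f x < h x"
  shows "integral\<^sup>L lborel f < integral\<^sup>L lborel h"
proof -
  let ?d = "\<lambda>x. h x - f x"
  have int_d: "integrable lborel ?d" using assms(1,2) by simp
  have "integral\<^sup>L lborel ?d \<noteq> 0"
  proof
    assume "integral\<^sup>L lborel ?d = 0"
    then have "AE x in lborel. ?d x = 0"
      using integral_nonneg_eq_0_iff_AE[OF int_d] assms(3) by simp
    then have "AE x in lborel. x \<notin> {s<..<t}"
      by (rule eventually_mono) (use assms(5) in force)
    then have "emeasure lborel {s<..<t} = 0"
      by (subst (asm) AE_iff_measurable[of "{s<..<t}"]) auto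
    then show False using assms(4) by simp
  qed
  moreover have "0 \<le> integral\<^sup>L lborel ?d" using assms(3) by simp
  ultimately show ?thesis using assms(1,2) by simp
qed

lemma integral_bayes_split_le:
  fixes M :: "'a measure" and fa fb :: "'a \<Rightarrow> real"
  assumes "integrable M fa" "integrable M fb" "S \<in> sets M" "T \<in> sets M"
    and "\<And>x. x \<in> T \<Longrightarrow> fb x \<le> fa x" "\<And>x. x \<notin> T \<Longrightarrow> fa x \<le> fb x"
  shows "(\<integral>x. indicator (-T) x * fa x + indicator T x * fb x \<partial>M)
       \<le> (\<integral>x. indicator (-S) x * fa x + indicator S x * fb x \<partial>M)"
proof -
  have split: "indicator (-A) x * fa x + indicator A x * fb x = fa x + indicator A x * (fb x - fa x)"
    for A and x :: 'a
    by (simp add: indicator_def)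
  have "integrable M (\<lambda>x. fa x + indicator A x * (fb x - fa x))" if "A \<in> sets M" for A
    using integrable_real_mult_indicator[OF that, of "\<lambda>x. fb x - fa x"] assms(1,2)
    by (simp add: mult.commute)
  then show ?thesis
    unfolding split using assms(3-6)
    by (intro integral_mono) (auto simp: indicator_def)
qed

locale prob_density =
  fixes g :: "real \<Rightarrow> real"
  assumes g_borel[measurable]: "g \<in> borel_measurable borel"
    and g_nonneg: "\<And>z. 0 \<le> g z"
    and prob_space_density: "prob_space (density lborel g)"
begin

lemma real_distribution_density: "real_distribution (density lborel g)"
  unfolding real_distribution_def real_distribution_axioms_def using prob_space_density by simp

lemma nn_integral_density: "(\<integral>\<^sup>+x. ennreal (g x) \<partial>lborel) = 1"
  using prob_space.emeasure_space_1[OF prob_space_density] by (simp add: emeasure_density)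

lemma integrable_density: "integrable lborel g"
  using nn_integral_density
  by (intro integrableI_nn_integral_finite[where x=1]) (simp_all add: g_nonneg)

lemma integrable_indicator_density: "A \<in> sets borel \<Longrightarrow> integrable lborel (\<lambda>x. indicator A x * g x)"
  using integrable_real_mult_indicator[OF _ integrable_density] by (simp add: mult.commute)

lemma measure_density_eq_integral:
  assumes "A \<in> sets borel"
  shows "measure (density lborel g) A = (\<integral>x. indicator A x * g x \<partial>lborel)"
proof -
  have "measure (density lborel g) A = enn2real (\<integral>\<^sup>+ x. ennreal (g x) * indicator A x \<partial>lborel)"
    using assms by (simp add: measure_def emeasure_density)
  also have "\<dots> = (\<integral>x. indicator A x * g x \<partial>lborel)"
    using assms integrable_indicator_density[OF assms]
    by (intro enn2real_nn_integral_eq_integral) (auto simp: indicator_def g_nonneg)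
  finally show ?thesis .
qed

lemma cdf_eq_integral: "cdf (density lborel g) t = (\<integral>x. indicator {..t} x * g x \<partial>lborel)"
  unfolding cdf_def by (simp add: measure_density_eq_integral)

lemma one_minus_cdf_eq_integral: "1 - cdf (density lborel g) t = (\<integral>x. indicator {t<..} x * g x \<partial>lborel)"
proof -
  interpret prob_space "density lborel g" by (rule prob_space_density)
  have "1 - cdf (density lborel g) t = measure (density lborel g) (space (density lborel g) - {..t})"
    unfolding cdf_def by (subst prob_compl) auto
  also have "space (density lborel g) - {..t} = {t<..}" by auto
  finally show ?thesis by (simp add: measure_density_eq_integral)
qed

lemma continuous_on_cdf: "continuous_on S (cdf (density lborel g))"
proof (intro continuous_at_imp_continuous_on ballI)
  interpret real_distribution "density lborel g" by (rule real_distribution_density)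
  fix t
  have "AE x in lborel. x \<in> {t} \<longrightarrow> g x = 0"
    using AE_lborel_singleton[of t] by (rule eventually_mono) simp
  then have "{t} \<in> null_sets (density lborel g)"
    by (simp add: null_sets_density_iff)
  then show "isCont (cdf (density lborel g)) t" by (auto simp: isCont_cdf measure_def)
qed

end

locale support_density = prob_density +
  fixes a b :: real
  assumes support_nonempty: "a < b"
    and g_pos: "\<And>z. z \<in> {a..b} \<Longrightarrow> 0 < g z"
    and g_outside: "\<And>z. z \<notin> {a..b} \<Longrightarrow> g z = 0"
begin

abbreviation G :: "real \<Rightarrow> real" where "G \<equiv> cdf (density lborel g)"

lemma cdf_less:
  assumes "z < t" "a < t" "z < b"
  shows "G z < G t"
proof -
  interpret real_distribution "density lborel g" by (rule real_distribution_density)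
  have "integral\<^sup>L lborel (\<lambda>_::real. 0) < (\<integral>x. indicator {z<..t} x * g x \<partial>lborel)"
  proof (rule integral_less_lborel[of _ _ "max z a" "min t b"])
    show "integrable lborel (\<lambda>x. indicator {z<..t} x * g x)"
      by (simp add: integrable_indicator_density)
  qed (use assms support_nonempty g_nonneg in \<open>auto simp: indicator_def g_pos\<close>)
  then show ?thesis
    using cdf_diff_eq[OF assms(1)] by (simp add: measure_density_eq_integral)
qed

lemma strict_mono_on_cdf: "strict_mono_on {a..b} G"
  by (rule strict_mono_onI) (use cdf_less in force)

lemma cdf_eq_0: "t \<le> a \<Longrightarrow> G t = 0"
  unfolding cdf_eq_integral
  using AE_lborel_singleton[of a] g_outside
  by (subst integral_eq_zero_AE) (auto elim!: eventually_mono simp: indicator_def)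

lemma cdf_eq_1:
  assumes "b \<le> t"
  shows "G t = 1"
proof -
  have "(\<lambda>x. indicator {t<..} x * g x) = (\<lambda>x. 0)"
    using assms g_outside by (auto simp: indicator_def)
  then show ?thesis using one_minus_cdf_eq_integral[of t] by simp
qed

lemma cdf_image: "G ` {a..b} = {0..1}"
proof
  interpret real_distribution "density lborel g" by (rule real_distribution_density)
  show "G ` {a..b} \<subseteq> {0..1}" using cdf_nonneg cdf_bounded_prob by auto
  show "{0..1} \<subseteq> G ` {a..b}"
    using IVT'[of G a _ b] cdf_eq_0[of a] cdf_eq_1[of b] support_nonempty continuous_on_cdf
    by (force simp: image_iff)
qed

lemma cdf_in_open_unit: "t \<in> {a<..<b} \<Longrightarrow> G t \<in> {0<..<1}"
  using cdf_less[of a t] cdf_less[of t b] cdf_eq_0[of a] cdf_eq_1[of b] by auto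

lemma quantile_cdf:
  assumes "t \<in> {a<..<b}"
  shows "quantile G (G t) = t"
proof -
  interpret real_distribution "density lborel g" by (rule real_distribution_density)
  have "{z. G t \<le> G z} = {t..}"
    using assms cdf_nondecreasing cdf_less[of _ t] by (auto simp: not_le[symmetric])
  then show ?thesis unfolding quantile_def by simp
qed

lemma inj_on_cdf: "inj_on G {a..b}"
  by (rule strict_mono_on_imp_inj_on[OF strict_mono_on_cdf])

(* quantile G 0 is the junk value Inf UNIV; the inverse of G on [a, b] is the continuous
   extension of quantile G from (0, 1) to [0, 1]. *)
lemma quantile_eq_the_inv_into:
  assumes "\<theta> \<in> {0<..<1}"
  shows "quantile G \<theta> = the_inv_into {a..b} G \<theta>"
proof -
  have "\<theta> \<in> G ` {a..b}" using assms by (simp add: cdf_image)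
  then obtain t where t: "t \<in> {a..b}" "\<theta> = G t" by blast
  moreover have "t \<noteq> a" "t \<noteq> b" using t assms cdf_eq_0[of a] cdf_eq_1[of b] by auto
  ultimately show ?thesis
    using quantile_cdf[of t] the_inv_into_f_f[OF inj_on_cdf] by simp
qed

lemma continuous_on_the_inv_into_cdf: "continuous_on {0..1} (the_inv_into {a..b} G)"
  using continuous_on_inv_into[OF continuous_on_cdf compact_Icc inj_on_cdf] by (simp add: cdf_image)

lemma the_inv_into_cdf_0: "the_inv_into {a..b} G 0 = a"
  using the_inv_into_f_f[OF inj_on_cdf, of a] cdf_eq_0[of a] support_nonempty by simp

lemma the_inv_into_cdf_1: "the_inv_into {a..b} G 1 = b"
  using the_inv_into_f_f[OF inj_on_cdf, of b] cdf_eq_1[of b] support_nonempty by simp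

end

lemma cdf_le_if_quantile_le:
  assumes A: "support_density ga a b" and B: "support_density gb a b"
    and quantile_le: "\<And>\<theta>. \<theta> \<in> {0<..<1} \<Longrightarrow>
      quantile (cdf (density lborel ga)) \<theta> \<le> quantile (cdf (density lborel gb)) \<theta>"
    and t: "t \<in> {a<..<b}"
  shows "cdf (density lborel gb) t \<le> cdf (density lborel ga) t"
proof -
  interpret A: support_density ga a b by (rule A)
  interpret B: support_density gb a b by (rule B)
  interpret A: real_distribution "density lborel ga" by (rule A.real_distribution_density)
  define \<theta> where "\<theta> = B.G t"
  have \<theta>: "\<theta> \<in> {0<..<1}" unfolding \<theta>_def using B.cdf_in_open_unit[OF t] .
  define s where "s = the_inv_into {a..b} A.G \<theta>"
  have "s = quantile A.G \<theta>"
    unfolding s_def by (rule A.quantile_eq_the_inv_into[OF \<theta>, symmetric])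
  also have "\<dots> \<le> quantile B.G \<theta>" by (rule quantile_le[OF \<theta>])
  also have "\<dots> = t" unfolding \<theta>_def by (rule B.quantile_cdf[OF t])
  finally have "A.G s \<le> A.G t" by (rule A.cdf_nondecreasing)
  moreover have "A.G s = \<theta>"
    unfolding s_def using \<theta> by (intro f_the_inv_into_f[OF A.inj_on_cdf]) (auto simp: A.cdf_image)
  ultimately show ?thesis unfolding \<theta>_def by simp
qed

(* Integrated over [a, z0] and [z0, b] the hypotheses give pi_a G_a(z0) < pi_b G_b(z0) and
   pi_b (1 - G_b(z0)) < pi_a (1 - G_a(z0)); together with G_b <= G_a this is impossible. *)
lemma quantile_order_excludes_reverse_crossing:
  assumes A: "support_density ga a b" and B: "support_density gb a b"
    and quantile_le: "\<And>\<theta>. \<theta> \<in> {0<..<1} \<Longrightarrow>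
      quantile (cdf (density lborel ga)) \<theta> \<le> quantile (cdf (density lborel gb)) \<theta>"
    and \<pi>b: "0 \<le> \<pi>b" and z0: "z0 \<in> {a<..<b}" and cross: "\<pi>a * ga z0 = \<pi>b * gb z0"
    and left: "\<And>z. z \<in> {a..<z0} \<Longrightarrow> \<pi>a * ga z < \<pi>b * gb z"
    and right: "\<And>z. z \<in> {z0<..b} \<Longrightarrow> \<pi>b * gb z < \<pi>a * ga z"
  shows False
proof -
  interpret A: support_density ga a b by (rule A)
  interpret B: support_density gb a b by (rule B)
  have outside: "\<pi>a * ga z = \<pi>b * gb z" if "z \<notin> {a..b}" for z
    using that A.g_outside B.g_outside by simp
  have le_left: "\<pi>a * ga z \<le> \<pi>b * gb z" if "z \<le> z0" for z
    using that left[of z] cross outside[of z] by (cases "z \<in> {a..b}"; cases "z = z0") auto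
  have le_right: "\<pi>b * gb z \<le> \<pi>a * ga z" if "z0 < z" for z
    using that right[of z] outside[of z] by (cases "z \<in> {a..b}") auto
  have lower: "\<pi>a * A.G z0 < \<pi>b * B.G z0"
  proof -
    have "(\<integral>x. \<pi>a * (indicator {..z0} x * ga x) \<partial>lborel) < (\<integral>x. \<pi>b * (indicator {..z0} x * gb x) \<partial>lborel)"
    proof (rule integral_less_lborel[of _ _ a z0])
      show "x \<in> {a<..<z0} \<Longrightarrow> \<pi>a * (indicator {..z0} x * ga x) < \<pi>b * (indicator {..z0} x * gb x)" for x
        using left[of x] by simp
    qed (use z0 le_left in \<open>auto simp: A.integrable_indicator_density
          B.integrable_indicator_density split: split_indicator\<close>)
    then show ?thesis by (simp add: A.cdf_eq_integral B.cdf_eq_integral)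
  qed
  have upper: "\<pi>b * (1 - B.G z0) < \<pi>a * (1 - A.G z0)"
  proof -
    have "(\<integral>x. \<pi>b * (indicator {z0<..} x * gb x) \<partial>lborel) < (\<integral>x. \<pi>a * (indicator {z0<..} x * ga x) \<partial>lborel)"
    proof (rule integral_less_lborel[of _ _ z0 b])
      show "x \<in> {z0<..<b} \<Longrightarrow> \<pi>b * (indicator {z0<..} x * gb x) < \<pi>a * (indicator {z0<..} x * ga x)" for x
        using right[of x] by simp
    qed (use z0 le_right in \<open>auto simp: A.integrable_indicator_density
          B.integrable_indicator_density split: split_indicator\<close>)
    then show ?thesis by (simp add: A.one_minus_cdf_eq_integral B.one_minus_cdf_eq_integral)
  qed
  have dominated: "B.G z0 \<le> A.G z0" by (rule cdf_le_if_quantile_le[OF A B quantile_le z0])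
  have "\<pi>a * A.G z0 < \<pi>b * A.G z0"
    using lower mult_left_mono[OF dominated \<pi>b] by linarith
  moreover have "\<pi>b * (1 - A.G z0) < \<pi>a * (1 - A.G z0)"
    using upper mult_left_mono[of "1 - A.G z0" "1 - B.G z0", OF _ \<pi>b] dominated by linarith
  moreover have "0 < A.G z0" "A.G z0 < 1" using A.cdf_in_open_unit[OF z0] by auto
  ultimately show False by (simp add: mult_less_cancel_right)
qed

lemma weighted_densities_order_at_crossing:
  assumes A: "support_density ga a b" and B: "support_density gb a b"
    and quantile_le: "\<And>\<theta>. \<theta> \<in> {0<..<1} \<Longrightarrow>
      quantile (cdf (density lborel ga)) \<theta> \<le> quantile (cdf (density lborel gb)) \<theta>"
    and \<pi>b: "0 \<le> \<pi>b" and z0: "z0 \<in> {a<..<b}" and cross: "\<pi>a * ga z0 = \<pi>b * gb z0"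
    and sides:
      "(\<forall>z\<in>{a..b}. (z < z0 \<longrightarrow> \<pi>a * ga z > \<pi>b * gb z) \<and> (z > z0 \<longrightarrow> \<pi>a * ga z < \<pi>b * gb z))
     \<or> (\<forall>z\<in>{a..b}. (z < z0 \<longrightarrow> \<pi>a * ga z < \<pi>b * gb z) \<and> (z > z0 \<longrightarrow> \<pi>a * ga z > \<pi>b * gb z))"
  shows "z \<le> z0 \<Longrightarrow> \<pi>b * gb z \<le> \<pi>a * ga z"
    and "z0 < z \<Longrightarrow> \<pi>a * ga z \<le> \<pi>b * gb z"
proof -
  interpret A: support_density ga a b by (rule A)
  interpret B: support_density gb a b by (rule B)
  have "\<not> (\<forall>z\<in>{a..b}. (z < z0 \<longrightarrow> \<pi>a * ga z < \<pi>b * gb z) \<and> (z > z0 \<longrightarrow> \<pi>a * ga z > \<pi>b * gb z))"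
  proof
    assume "\<forall>z\<in>{a..b}. (z < z0 \<longrightarrow> \<pi>a * ga z < \<pi>b * gb z) \<and> (z > z0 \<longrightarrow> \<pi>a * ga z > \<pi>b * gb z)"
    then show False
      by (intro quantile_order_excludes_reverse_crossing[OF A B _ \<pi>b z0 cross])
         (use quantile_le z0 in auto)
  qed
  then have alpha_left:
    "\<forall>z\<in>{a..b}. (z < z0 \<longrightarrow> \<pi>a * ga z > \<pi>b * gb z) \<and> (z > z0 \<longrightarrow> \<pi>a * ga z < \<pi>b * gb z)"
    using sides by blast
  show "\<pi>b * gb z \<le> \<pi>a * ga z" if "z \<le> z0"
    using alpha_left that cross A.g_outside B.g_outside
    by (cases "z \<in> {a..b}"; cases "z = z0") (auto simp: less_imp_le)
  show "\<pi>a * ga z \<le> \<pi>b * gb z" if "z0 < z"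
    using alpha_left that A.g_outside B.g_outside by (cases "z \<in> {a..b}") auto
qed

lemma exists_quantile_mixture_eq:
  assumes A: "support_density ga a b" and B: "support_density gb a b" and z: "z \<in> {a<..<b}"
  shows "\<exists>\<theta>\<in>{0<..<1}.
    \<theta> * quantile (cdf (density lborel ga)) \<theta> + (1 - \<theta>) * quantile (cdf (density lborel gb)) \<theta> = z"
proof -
  interpret A: support_density ga a b by (rule A)
  interpret B: support_density gb a b by (rule B)
  define F where "F \<theta> = \<theta> * the_inv_into {a..b} A.G \<theta> + (1 - \<theta>) * the_inv_into {a..b} B.G \<theta>" for \<theta>
  have "continuous_on {0..1} F"
    unfolding F_def
    by (intro continuous_intros A.continuous_on_the_inv_into_cdf B.continuous_on_the_inv_into_cdf)
  moreover have F0: "F 0 = a" and F1: "F 1 = b"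
    unfolding F_def by (simp_all add: A.the_inv_into_cdf_1 B.the_inv_into_cdf_0)
  ultimately obtain \<theta> where \<theta>: "0 \<le> \<theta>" "\<theta> \<le> 1" "F \<theta> = z"
    using IVT'[of F 0 z 1] z by auto
  moreover have "\<theta> \<noteq> 0" "\<theta> \<noteq> 1" using \<theta>(3) F0 F1 z by auto
  ultimately have "\<theta> \<in> {0<..<1}" by simp
  then show ?thesis
    using \<theta>(3) unfolding F_def
    by (intro bexI[of _ \<theta>]) (simp_all add: A.quantile_eq_the_inv_into B.quantile_eq_the_inv_into)
qed

lemma measurable_inner_of_sets_borel:
  fixes P :: "'a::euclidean_space measure"
  assumes "sets P = sets borel"
  shows "(\<lambda>x. u \<bullet> x) \<in> P \<rightarrow>\<^sub>M borel"
proof -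
  have "(\<lambda>x. u \<bullet> x) \<in> borel_measurable (borel :: 'a measure)" by measurable
  moreover have "measurable P (borel :: real measure) = measurable borel borel"
    by (rule measurable_cong_sets) (simp_all add: assms)
  ultimately show ?thesis by simp
qed

lemma measure_inner_eq_distr:
  fixes P :: "'a::euclidean_space measure"
  assumes "sets P = sets borel" "A \<in> sets borel"
  shows "measure P {x \<in> space P. u \<bullet> x \<in> A} = measure (distr P borel (\<lambda>x. u \<bullet> x)) A"
proof -
  have "(\<lambda>x. u \<bullet> x) -` A \<inter> space P = {x \<in> space P. u \<bullet> x \<in> A}" by auto
  then show ?thesis
    using measure_distr[OF measurable_inner_of_sets_borel[OF assms(1)] assms(2)] by simp
qed

lemma proj_cdf_eq_cdf_distr:
  assumes "sets P = sets borel"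
  shows "proj_cdf P u = cdf (distr P borel (\<lambda>x. u \<bullet> x))"
  using measure_inner_eq_distr[OF assms, of "{.._}" u]
  unfolding proj_cdf_def cdf_def by (simp add: fun_eq_iff)

lemma support_density_of_distr:
  fixes P :: "'a::euclidean_space measure"
  assumes "prob_space P" "sets P = sets borel" "g \<in> borel_measurable borel"
    and "distr P borel (\<lambda>x. u \<bullet> x) = density lborel g"
    and "a < b" "\<forall>z\<in>{a..b}. g z > 0" "\<forall>z. z \<notin> {a..b} \<longrightarrow> g z = 0"
  shows "support_density g a b"
proof -
  have "prob_space (density lborel g)"
    using prob_space.prob_space_distr[OF assms(1) measurable_inner_of_sets_borel[OF assms(2), of u]] assms(4)
    by simp
  moreover have "0 \<le> g z" for z
    using assms(6,7) by (cases "z \<in> {a..b}") (auto simp: less_imp_le)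
  ultimately show ?thesis
    using assms unfolding support_density_def support_density_axioms_def prob_density_def by auto
qed

definition proj_error :: "real \<Rightarrow> (real^'p) measure \<Rightarrow> real \<Rightarrow> (real^'p) measure \<Rightarrow> real^'p \<Rightarrow> real set \<Rightarrow> real" where
  "proj_error \<pi>a Pa \<pi>b Pb u A =
     \<pi>a * measure Pa {x \<in> space Pa. u \<bullet> x \<notin> A} + \<pi>b * measure Pb {x \<in> space Pb. u \<bullet> x \<in> A}"

lemma bayes_error_proj_eq_INF:
  "bayes_error_proj \<pi>a Pa \<pi>b Pb u = (INF A \<in> sets borel. proj_error \<pi>a Pa \<pi>b Pb u A)"
  unfolding bayes_error_proj_def proj_error_def ..

lemma dq_error_eq_proj_error:
  assumes "prob_space Pa" "sets Pa = sets borel"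
  shows "dq_error \<pi>a Pa \<pi>b Pb u \<theta> = proj_error \<pi>a Pa \<pi>b Pb u {..Q_tilde Pa Pb u \<theta>}"
proof -
  interpret prob_space Pa by (rule assms(1))
  have "{x \<in> space Pa. u \<bullet> x \<le> t} \<in> sets Pa" for t
    using measurable_inner_of_sets_borel[OF assms(2)] by measurable
  then have "1 - proj_cdf Pa u t = measure Pa {x \<in> space Pa. u \<bullet> x \<notin> {..t}}" for t
    unfolding proj_cdf_def by (subst prob_compl[symmetric]) (auto intro!: arg_cong[where f="measure Pa"])
  then show ?thesis unfolding dq_error_def proj_error_def proj_cdf_def by simp
qed

lemma proj_error_eq_integral:
  assumes "sets Pa = sets borel" "sets Pb = sets borel"
    and "distr Pa borel (\<lambda>x. u \<bullet> x) = density lborel ga" "distr Pb borel (\<lambda>x. u \<bullet> x) = density lborel gb"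
    and A: "prob_density ga" and B: "prob_density gb" and "S \<in> sets borel"
  shows "proj_error \<pi>a Pa \<pi>b Pb u S
    = (\<integral>x. indicator (-S) x * (\<pi>a * ga x) + indicator S x * (\<pi>b * gb x) \<partial>lborel)"
proof -
  interpret A: prob_density ga by (rule A)
  interpret B: prob_density gb by (rule B)
  have "{x \<in> space Pa. u \<bullet> x \<notin> S} = {x \<in> space Pa. u \<bullet> x \<in> -S}" by auto
  then show ?thesis
    unfolding proj_error_def
    using assms measure_inner_eq_distr[OF assms(1), of "-S" u] measure_inner_eq_distr[OF assms(2), of S u]
    by (simp add: A.measure_density_eq_integral B.measure_density_eq_integral
        A.integrable_indicator_density B.integrable_indicator_density mult.left_commute)
qed

lemma proj_error_half_line_le:
  assumes "sets Pa = sets borel" "sets Pb = sets borel"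
    and "distr Pa borel (\<lambda>x. u \<bullet> x) = density lborel ga" "distr Pb borel (\<lambda>x. u \<bullet> x) = density lborel gb"
    and "prob_density ga" "prob_density gb"
    and "\<And>x. x \<le> z0 \<Longrightarrow> \<pi>b * gb x \<le> \<pi>a * ga x" "\<And>x. z0 < x \<Longrightarrow> \<pi>a * ga x \<le> \<pi>b * gb x"
    and "S \<in> sets borel"
  shows "proj_error \<pi>a Pa \<pi>b Pb u {..z0} \<le> proj_error \<pi>a Pa \<pi>b Pb u S"
proof -
  have half_line: "{..z0} \<in> sets borel" by simp
  show ?thesis
    unfolding proj_error_eq_integral[OF assms(1-6) assms(9)] proj_error_eq_integral[OF assms(1-6) half_line]
    using assms prob_density.integrable_density[OF assms(5)] prob_density.integrable_density[OF assms(6)]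
    by (intro integral_bayes_split_le) (auto simp: not_le)
qed

theorem theorem1:
  fixes Pa Pb :: "(real^'p) measure" and u :: "real^'p"
    and \<pi>a \<pi>b :: real and ga gb :: "real \<Rightarrow> real" and a b z0 :: real
  assumes Pa_prob: "prob_space Pa" and Pb_prob: "prob_space Pb"
    and Pa_sets: "sets Pa = sets borel" and Pb_sets: "sets Pb = sets borel"
    and Pa_ac: "absolutely_continuous lborel Pa" and Pb_ac: "absolutely_continuous lborel Pb"
    and priors: "\<pi>a > 0" "\<pi>b > 0" "\<pi>a + \<pi>b = 1"
    and unit: "norm u = 1"
    and alpha_min: "\<forall>\<theta>\<in>{0<..<1}.
          quantile (proj_cdf Pa u) \<theta> \<le> quantile (proj_cdf Pb u) \<theta>"
    and ga_meas: "ga \<in> borel_measurable borel" and gb_meas: "gb \<in> borel_measurable borel"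
    and ga_dens: "distr Pa borel (\<lambda>x. u \<bullet> x) = density lborel ga"
    and gb_dens: "distr Pb borel (\<lambda>x. u \<bullet> x) = density lborel gb"
    and dom: "a < b"
    and ga_pos: "\<forall>z\<in>{a..b}. ga z > 0" and gb_pos: "\<forall>z\<in>{a..b}. gb z > 0"
    and ga_zero: "\<forall>z. z \<notin> {a..b} \<longrightarrow> ga z = 0"
    and gb_zero: "\<forall>z. z \<notin> {a..b} \<longrightarrow> gb z = 0"
    and z0_in: "z0 \<in> {a<..<b}"
    and cross_eq: "\<pi>a * ga z0 = \<pi>b * gb z0"
    and cross_sides:
      "(\<forall>z\<in>{a..b}. (z < z0 \<longrightarrow> \<pi>a * ga z > \<pi>b * gb z) \<and> (z > z0 \<longrightarrow> \<pi>a * ga z < \<pi>b * gb z))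
     \<or> (\<forall>z\<in>{a..b}. (z < z0 \<longrightarrow> \<pi>a * ga z < \<pi>b * gb z) \<and> (z > z0 \<longrightarrow> \<pi>a * ga z > \<pi>b * gb z))"
  shows "\<exists>\<theta>\<in>{0<..<1}.
           (\<forall>\<theta>'\<in>{0<..<1}. dq_error \<pi>a Pa \<pi>b Pb u \<theta> \<le> dq_error \<pi>a Pa \<pi>b Pb u \<theta>')
         \<and> dq_error \<pi>a Pa \<pi>b Pb u \<theta> = bayes_error_proj \<pi>a Pa \<pi>b Pb u"
proof -
  have A: "support_density ga a b"
    by (rule support_density_of_distr[OF Pa_prob Pa_sets ga_meas ga_dens dom ga_pos ga_zero])
  have B: "support_density gb a b"
    by (rule support_density_of_distr[OF Pb_prob Pb_sets gb_meas gb_dens dom gb_pos gb_zero])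
  have cdfs: "proj_cdf Pa u = cdf (density lborel ga)" "proj_cdf Pb u = cdf (density lborel gb)"
    using proj_cdf_eq_cdf_distr[OF Pa_sets] proj_cdf_eq_cdf_distr[OF Pb_sets] ga_dens gb_dens by simp_all
  have bayes_rule: "proj_error \<pi>a Pa \<pi>b Pb u {..z0} \<le> proj_error \<pi>a Pa \<pi>b Pb u S"
    if "S \<in> sets borel" for S
    using weighted_densities_order_at_crossing[OF A B _ _ z0_in cross_eq cross_sides] alpha_min priors(2)
    by (intro proj_error_half_line_le[OF Pa_sets Pb_sets ga_dens gb_dens
          A[THEN support_density.axioms(1)] B[THEN support_density.axioms(1)] _ _ that])
       (simp_all add: cdfs)
  obtain \<theta> where \<theta>: "\<theta> \<in> {0<..<1}" "Q_tilde Pa Pb u \<theta> = z0"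
    using exists_quantile_mixture_eq[OF A B z0_in] unfolding Q_tilde_def cdfs by blast
  have "bayes_error_proj \<pi>a Pa \<pi>b Pb u = proj_error \<pi>a Pa \<pi>b Pb u {..z0}"
    unfolding bayes_error_proj_eq_INF by (rule cInf_eq_minimum) (auto intro: bayes_rule)
  then show ?thesis
    using \<theta> bayes_rule by (intro bexI[of _ \<theta>]) (simp_all add: dq_error_eq_proj_error[OF Pa_prob Pa_sets])
qed

end
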